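(* Let $d,k\ge 1$, let $A\in\mathbb{R}^{k\times d}$ (a linear "style extractor"), let $y_1\in\mathbb{R}^k$ (reference style features), let $x_0\in\mathbb{R}^d$ and let $\gamma>0$. Consider the deterministic optimal control problem on the time interval $[0,1]$ $$\min_{u\in\mathcal{U}}\ \int_{0}^{1}\frac12\|u(X^u_t,t)\|^2\,dt+\frac{\gamma}{2}\|AX^u_1-y_1\|_2^2,\qquad\text{where } \mathrm{d}X^u_t=\big[X^u_t+u(X^u_t,t)\big]\,\mathrm{d}t,\quad X^u_{0}=x_0 .$$ Let $V^*(x,t)$ be the value function of this problem and write $\mathbf{p}_t=\nabla_x V^*(x,t)$ evaluated along the optimal trajectory. Then the optimal controller is $u^*(t)=-\mathbf{p}_t$, where the instantaneous optimal state $X^u_t=\mathbf{x}_t$ (with terminal state $\mathbf{x}_1$) and $\mathbf{p}_t$ satisfy $$\begin{bmatrix}\mathbf{x}_t\\ \mathbf{p}_t\end{bmatrix}=\begin{bmatrix} x_0e^{t}-\frac{\gamma}{2}A^T(A\mathbf{x}_1-y_1)e^{1+t}+\frac{\gamma}{2}A^T(A\mathbf{x}_1-y_1)e^{1-t}\\ \gamma A^T(A\mathbf{x}_1-y_1)e^{1-t}\end{bmatrix}.$$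
   Context: $\mathcal{U}$ denotes the admissible set of (feedback) controllers $u:\mathbb{R}^d\times[0,1]\to\mathbb{R}^d$, and $X^u_t$ is the state trajectory generated by the stated dynamics. The value function is $V^*(x,t)=\min_{u\in\mathcal{U}}\big[\int_t^1\frac12\|u(X^u_s,s)\|^2ds+\frac{\gamma}{2}\|AX^u_1-y_1\|_2^2\big]$ with $X^u_t=x$; it is assumed to have continuous partial derivatives so that it satisfies the Hamilton–Jacobi–Bellman equation $-\partial_t V^*(x,t)=\min_u\big[\frac12\|u\|^2+\nabla_xV^*(x,t)^T(x+u)\big]$. *)

theory Defs
  imports "HOL-Analysis.Analysis"
begin

text \<open>Feedback controllers u : R^d x [0,1] -> R^d are functions
  real^'d => real => real^'d (only their values for times in [0,1] matter).\<close>

definition traj :: "(real^'d \<Rightarrow> real \<Rightarrow> real^'d) \<Rightarrow> real^'d \<Rightarrow> real \<Rightarrow> (real \<Rightarrow> real^'d) \<Rightarrow> bool" where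
  "traj u x t X \<longleftrightarrow> X t = x \<and>
     (\<forall>s\<in>{t..1}. (X has_vector_derivative (X s + u (X s) s)) (at s within {t..1}))"

definition admissible :: "(real^'d \<Rightarrow> real \<Rightarrow> real^'d) \<Rightarrow> bool" where
  "admissible u \<longleftrightarrow> (\<forall>x. \<forall>t\<in>{0..1}.
      (\<exists>X. traj u x t X) \<and>
      (\<forall>X Y. traj u x t X \<and> traj u x t Y \<longrightarrow> (\<forall>s\<in>{t..1}. X s = Y s)) \<and>
      (\<forall>X. traj u x t X \<longrightarrow> (\<lambda>s. norm (u (X s) s) ^ 2) integrable_on {t..1}))"

definition state :: "(real^'d \<Rightarrow> real \<Rightarrow> real^'d) \<Rightarrow> real^'d \<Rightarrow> real \<Rightarrow> real \<Rightarrow> real^'d" where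
  "state u x t = (SOME X. traj u x t X)"

definition cost :: "real^'d^'k \<Rightarrow> real^'k \<Rightarrow> real \<Rightarrow> (real^'d \<Rightarrow> real \<Rightarrow> real^'d) \<Rightarrow> real^'d \<Rightarrow> real \<Rightarrow> real" where
  "cost A y1 \<gamma> u x t =
     integral {t..1} (\<lambda>s. (1/2) * norm (u (state u x t s) s) ^ 2)
     + (\<gamma>/2) * norm (A *v state u x t 1 - y1) ^ 2"

definition value_fun :: "real^'d^'k \<Rightarrow> real^'k \<Rightarrow> real \<Rightarrow> real^'d \<Rightarrow> real \<Rightarrow> real" where
  "value_fun A y1 \<gamma> x t = (INF u\<in>{u. admissible u}. cost A y1 \<gamma> u x t)"

end

theory Submission
  imports Defs
begin

text \<open>Along the optimal trajectory X the chain rule gives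
  d/dt V(X t, t) = V_x . (X + u) + V_t, and the HJB equation, whose minimum over v is attained at
  v = -V_x, turns V_x . (X + u) + V_t + |u|^2/2 into |u + V_x|^2/2. Integrating over [0,1] and using
  V(x0, 0) = cost of u and V(x, 1) = gamma/2 |A x - y1|^2 gives that the integral of |u + V_x|^2/2
  vanishes, so u = -V_x almost everywhere, and everywhere because X is differentiable and V_x is
  continuous. The optimal control is therefore continuous and competes with all continuous open-loop
  controls. Perturbing it in the direction q = u + exp(1 - t) p1, with p1 = gamma A^T (A X 1 - y1),
  changes the cost by eps |q|^2 + O(eps^2), which forces q = 0. This gives
  V_x = -u = gamma exp(1 - t) A^T (A X 1 - y1), and solving the linear equation X' = X + u gives X.\<close>

lemma has_integral_0_nonneg_imp_negligible:
  fixes f :: "'a::euclidean_space \<Rightarrow> real"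
  assumes f: "(f has_integral 0) S" and nonneg: "\<And>x. x \<in> S \<Longrightarrow> 0 \<le> f x"
  shows "negligible {x\<in>S. f x \<noteq> 0}"
proof -
  have abs_int: "f absolutely_integrable_on S"
    using f nonneg nonnegative_absolutely_integrable_1 by (blast intro: has_integral_integrable)
  then have int: "integrable lebesgue (\<lambda>x. indicator S x *\<^sub>R f x)"
    by (simp add: set_integrable_def)
  have "integral\<^sup>L lebesgue (\<lambda>x. indicator S x *\<^sub>R f x) = integral S f"
    using set_lebesgue_integral_eq_integral(2)[OF abs_int] by (simp add: set_lebesgue_integral_def)
  also have "\<dots> = 0"
    using f by (simp add: integral_unique)
  finally have "AE x in lebesgue. indicator S x *\<^sub>R f x = 0"
    using integral_nonneg_eq_0_iff_AE[OF int] nonneg by (auto simp: indicator_def)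
  then obtain N where N: "{x\<in>space lebesgue. indicator S x *\<^sub>R f x \<noteq> 0} \<subseteq> N" "N \<in> null_sets lebesgue"
    by (auto elim: AE_E simp: null_sets_def)
  have "negligible N"
    using N(2) by (simp add: negligible_iff_null_sets)
  moreover have "{x\<in>S. f x \<noteq> 0} \<subseteq> N"
    using N(1) by (auto simp: indicator_def)
  ultimately show ?thesis
    by (rule negligible_subset)
qed

lemma has_vector_derivative_eq_ae_imp_eq:
  fixes X :: "real \<Rightarrow> 'a::euclidean_space"
  assumes "a < b"
    and X: "\<And>s. s \<in> {a..b} \<Longrightarrow> (X has_vector_derivative g s) (at s within {a..b})"
    and N: "negligible N" and ae: "\<And>s. s \<in> {a..b} - N \<Longrightarrow> g s = f s"
    and f: "continuous_on {a..b} f"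
    and s: "s \<in> {a..b}"
  shows "g s = f s"
proof -
  have X_eq: "X t = X a + integral {a..t} f" if t: "t \<in> {a..b}" for t
  proof -
    have "(g has_integral X t - X a) {a..t}"
      using t by (intro fundamental_theorem_of_calculus)
        (auto intro: has_vector_derivative_within_subset[OF X])
    then have "(f has_integral X t - X a) {a..t}"
      by (rule has_integral_spike[OF N, rotated]) (use t ae in auto)
    then show ?thesis
      by (simp add: integral_unique)
  qed
  have D: "((\<lambda>t. X a + integral {a..t} f) has_vector_derivative f s) (at s within {a..b})"
    using has_vector_derivative_add[OF has_vector_derivative_const integral_has_vector_derivative[OF f s]]
    by simp
  have "(X has_vector_derivative f s) (at s within {a..b})"
    by (rule has_vector_derivative_transform[OF s _ D]) (rule X_eq)
  then show ?thesis
    using vector_derivative_unique_within_closed_interval[of a b s X] \<open>a < b\<close> s X[OF s] by simp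
qed

lemma has_vector_derivative_along_curve:
  fixes F :: "'a::real_inner \<Rightarrow> real \<Rightarrow> real"
  assumes F: "((\<lambda>(z, s). F z s) has_derivative (\<lambda>(h, r). Fz \<bullet> h + Fs * r)) (at (X t, t) within UNIV \<times> S)"
    and X: "(X has_vector_derivative X') (at t within S)"
  shows "((\<lambda>s. F (X s) s) has_vector_derivative Fz \<bullet> X' + Fs) (at t within S)"
proof -
  have "((\<lambda>s. (X s, s)) has_vector_derivative (X', 1)) (at t within S)"
    using X by (intro has_vector_derivative_Pair) (auto intro: derivative_eq_intros)
  moreover have "((\<lambda>(z, s). F z s) has_derivative (\<lambda>(h, r). Fz \<bullet> h + Fs * r))
      (at (X t, t) within (\<lambda>s. (X s, s)) ` S)"
    by (rule has_derivative_subset[OF F]) auto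
  ultimately show ?thesis
    by (auto dest: vector_derivative_diff_chain_within simp: o_def)
qed

lemma affine_ode_unique:
  fixes X Y :: "real \<Rightarrow> 'a::euclidean_space"
  assumes X: "\<And>s. s \<in> {t..b} \<Longrightarrow> (X has_vector_derivative (X s + c s)) (at s within {t..b})"
    and Y: "\<And>s. s \<in> {t..b} \<Longrightarrow> (Y has_vector_derivative (Y s + c s)) (at s within {t..b})"
    and "X t = Y t" and s: "s \<in> {t..b}"
  shows "X s = Y s"
proof -
  define D where "D s = exp (- s) *\<^sub>R (X s - Y s)" for s
  have "(D has_vector_derivative 0) (at r within {t..s})" if r: "r \<in> {t..s}" for r
  proof -
    have r': "r \<in> {t..b}" and sub: "{t..s} \<subseteq> {t..b}"
      using r s by auto
    have "(D has_vector_derivative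
        exp (- r) *\<^sub>R ((X r + c r) - (Y r + c r)) + (- exp (- r)) *\<^sub>R (X r - Y r)) (at r within {t..s})"
      unfolding D_def
      by (intro has_vector_derivative_scaleR has_vector_derivative_diff
          has_vector_derivative_within_subset[OF X[OF r'] sub]
          has_vector_derivative_within_subset[OF Y[OF r'] sub])
        (auto intro!: derivative_eq_intros)
    then show ?thesis
      by (simp add: algebra_simps)
  qed
  then have "((\<lambda>_. 0) has_integral D s - D t) {t..s}"
    using s by (intro fundamental_theorem_of_calculus) auto
  then have "D s = D t"
    by simp
  then show ?thesis
    using \<open>X t = Y t\<close> by (simp add: D_def)
qed

lemma hamiltonian_min_eq_square:
  fixes p x :: "'a::real_inner"
  assumes le: "\<And>v. c \<le> (1/2) * norm v ^ 2 + p \<bullet> (x + v)"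
    and eq: "c = (1/2) * norm v0 ^ 2 + p \<bullet> (x + v0)"
  shows "(1/2) * norm w ^ 2 + p \<bullet> (x + w) - c = (1/2) * norm (w + p) ^ 2"
proof -
  have "0 \<le> (v0 + p) \<bullet> (v0 + p)"
    by simp
  then have "c = p \<bullet> x - (1/2) * (p \<bullet> p)"
    using le[of "- p"] eq
    by (simp add: power2_norm_eq_inner inner_add_left inner_add_right inner_commute algebra_simps)
  then show ?thesis
    by (simp add: power2_norm_eq_inner inner_add_left inner_add_right inner_commute algebra_simps)
qed

lemma quadratic_nonneg_imp_linear_coeff_0:
  fixes a C :: real
  assumes nonneg: "\<And>\<epsilon>. 0 \<le> \<epsilon> * a + \<epsilon>\<^sup>2 * C"
  shows "a = 0"
proof (rule ccontr)
  assume "a \<noteq> 0"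
  define K where "K = \<bar>C\<bar> + 1"
  have "K > 0" "C < K"
    by (auto simp: K_def)
  have "K\<^sup>2 * ((- a / K) * a + (- a / K)\<^sup>2 * C) = a\<^sup>2 * (C - K)"
    using \<open>K > 0\<close> by (simp add: power2_eq_square field_simps)
  also have "\<dots> < 0"
    using \<open>a \<noteq> 0\<close> \<open>C < K\<close> by (simp add: mult_pos_neg)
  moreover have "0 \<le> K\<^sup>2 * ((- a / K) * a + (- a / K)\<^sup>2 * C)"
    using mult_nonneg_nonneg[OF zero_le_power2[of K] nonneg[of "- a / K"]] .
  ultimately show False
    by linarith
qed

lemma norm_add_scaleR_power2:
  fixes u z :: "'a::real_inner"
  shows "norm (u + \<epsilon> *\<^sub>R z) ^ 2 = norm u ^ 2 + 2 * \<epsilon> * (u \<bullet> z) + \<epsilon>\<^sup>2 * norm z ^ 2"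
  unfolding power2_norm_eq_inner
  by (simp add: inner_add_left inner_add_right inner_commute power2_eq_square algebra_simps)

lemma state_traj:
  assumes "admissible u" and "t \<in> {0..1}"
  shows "traj u x t (state u x t)"
proof -
  have "\<exists>X. traj u x t X"
    using assms unfolding admissible_def by blast
  then show ?thesis
    unfolding state_def by (rule someI_ex)
qed

lemma state_eq_traj:
  assumes "admissible u" and "t \<in> {0..1}" and "traj u x t X" and "s \<in> {t..1}"
  shows "state u x t s = X s"
  using assms state_traj[OF assms(1,2)] unfolding admissible_def by blast

lemma traj_continuous_on:
  assumes "traj u x t X"
  shows "continuous_on {t..1} X"
  using assms unfolding traj_def continuous_on_eq_continuous_within
  by (blast intro: has_vector_derivative_continuous)

lemma traj_open_loop:
  fixes c :: "real \<Rightarrow> real^'d" and t :: real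
  assumes c: "continuous_on {t..1} c"
  shows "traj (\<lambda>_ s. c s) x t (\<lambda>s. exp s *\<^sub>R (exp (- t) *\<^sub>R x + integral {t..s} (\<lambda>r. exp (- r) *\<^sub>R c r)))"
  unfolding traj_def
proof (intro conjI ballI)
  show "exp t *\<^sub>R (exp (- t) *\<^sub>R x + integral {t..t} (\<lambda>r. exp (- r) *\<^sub>R c r)) = x"
    by (simp add: exp_minus)
next
  fix s assume s: "s \<in> {t..1}"
  let ?I = "\<lambda>s. exp (- t) *\<^sub>R x + integral {t..s} (\<lambda>r. exp (- r) *\<^sub>R c r)"
  have "((\<lambda>s. exp s *\<^sub>R ?I s) has_vector_derivative
      exp s *\<^sub>R (0 + exp (- s) *\<^sub>R c s) + exp s *\<^sub>R ?I s) (at s within {t..1})"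
    using s c
    by (intro has_vector_derivative_scaleR has_vector_derivative_add has_vector_derivative_const
        integral_has_vector_derivative continuous_intros)
      (auto intro: DERIV_subset[OF DERIV_exp])
  then show "((\<lambda>s. exp s *\<^sub>R ?I s) has_vector_derivative exp s *\<^sub>R ?I s + c s) (at s within {t..1})"
    by (simp add: exp_minus add.commute)
qed

lemma admissible_open_loop:
  fixes c :: "real \<Rightarrow> real^'d"
  assumes c: "continuous_on {0..1} c"
  shows "admissible (\<lambda>_ s. c s)"
  unfolding admissible_def
proof (intro allI ballI conjI impI)
  fix x :: "real^'d" and t :: real assume t: "t \<in> {0..1}"
  have c': "continuous_on {t..1} c"
    using c t by (auto intro: continuous_on_subset)
  show "\<exists>X. traj (\<lambda>_ s. c s) x t X"
    using traj_open_loop[OF c'] by blast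
  show "X s = Y s" if "traj (\<lambda>_ s. c s) x t X \<and> traj (\<lambda>_ s. c s) x t Y" and "s \<in> {t..1}" for X Y s
    using that unfolding traj_def by (auto intro: affine_ode_unique[of t 1 X c Y])
  show "(\<lambda>s. norm (c s) ^ 2) integrable_on {t..1}" for X
    by (intro integrable_continuous_interval continuous_intros c')
qed

lemma state_open_loop:
  fixes c :: "real \<Rightarrow> real^'d"
  assumes c: "continuous_on {0..1} c" and t: "t \<in> {0..1}" and s: "s \<in> {t..1}"
  shows "state (\<lambda>_ s. c s) x t s = exp s *\<^sub>R (exp (- t) *\<^sub>R x + integral {t..s} (\<lambda>r. exp (- r) *\<^sub>R c r))"
proof (rule state_eq_traj[OF admissible_open_loop[OF c] t traj_open_loop s])
  show "continuous_on {t..1} c"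
    using c t by (auto intro: continuous_on_subset)
qed

lemma cost_nonneg:
  assumes "\<gamma> > 0"
  shows "0 \<le> cost A y1 \<gamma> u x t"
proof -
  have "0 \<le> integral {t..1} (\<lambda>s. (1/2) * norm (u (state u x t s) s) ^ 2)"
    by (cases "(\<lambda>s. (1/2) * norm (u (state u x t s) s) ^ 2) integrable_on {t..1}")
      (auto intro: integral_nonneg simp: not_integrable_integral)
  then show ?thesis
    unfolding cost_def using assms by simp
qed

lemma value_fun_le_cost:
  assumes "\<gamma> > 0" and "admissible u"
  shows "value_fun A y1 \<gamma> x t \<le> cost A y1 \<gamma> u x t"
  unfolding value_fun_def
  by (rule cINF_lower) (use assms cost_nonneg in \<open>auto intro!: bdd_belowI2[where m=0]\<close>)

lemma value_fun_terminal:
  assumes "admissible (u :: real^'d \<Rightarrow> real \<Rightarrow> real^'d)"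
  shows "value_fun A y1 \<gamma> (x :: real^'d) 1 = \<gamma>/2 * norm (A *v x - y1) ^ 2"
proof -
  have terminal: "cost A y1 \<gamma> u' x 1 = \<gamma>/2 * norm (A *v x - y1) ^ 2" if "admissible u'" for u'
    using state_traj[OF that, of 1 x] by (simp add: cost_def traj_def)
  have "value_fun A y1 \<gamma> x 1 =
      (INF u'\<in>{u' :: real^'d \<Rightarrow> real \<Rightarrow> real^'d. admissible u'}. \<gamma>/2 * norm (A *v x - y1) ^ 2)"
    unfolding value_fun_def
    by (rule arg_cong[where f=Inf], rule image_cong[OF refl]) (simp add: terminal)
  also have "\<dots> = \<gamma>/2 * norm (A *v x - y1) ^ 2"
    using assms by (intro cINF_const) auto
  finally show ?thesis .
qed

lemma traj_open_loop_exp_forcing: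
  fixes v :: "real^'d"
  assumes X: "traj (\<lambda>_ s. w s) x0 0 X"
    and w: "\<And>s. s \<in> {0..1} \<Longrightarrow> w s = - (\<gamma> * exp (1 - s)) *\<^sub>R v"
    and t: "t \<in> {0..1}"
  shows "X t = exp t *\<^sub>R x0 - (\<gamma>/2 * exp (1 + t)) *\<^sub>R v + (\<gamma>/2 * exp (1 - t)) *\<^sub>R v"
proof -
  define Z where "Z t = exp t *\<^sub>R x0 - (\<gamma>/2 * exp (1 + t)) *\<^sub>R v + (\<gamma>/2 * exp (1 - t)) *\<^sub>R v" for t
  have Z': "(Z has_vector_derivative Z s + w s) (at s within {0..1})" if s: "s \<in> {0..1}" for s
  proof -
    have D: "(Z has_vector_derivative
        exp s *\<^sub>R x0 - (\<gamma>/2 * exp (1 + s)) *\<^sub>R v + (\<gamma>/2 * - exp (1 - s)) *\<^sub>R v) (at s within {0..1})"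
      unfolding Z_def by (auto intro!: derivative_eq_intros)
    have split: "(\<gamma>/2 * - exp (1 - s)) *\<^sub>R v = (\<gamma>/2 * exp (1 - s)) *\<^sub>R v - (\<gamma> * exp (1 - s)) *\<^sub>R v"
      by (simp flip: scaleR_diff_left)
    have "exp s *\<^sub>R x0 - (\<gamma>/2 * exp (1 + s)) *\<^sub>R v + (\<gamma>/2 * - exp (1 - s)) *\<^sub>R v = Z s + w s"
      unfolding split Z_def w[OF s] by (simp only: diff_conv_add_uminus add.assoc scaleR_minus_left)
    then show ?thesis
      using D by simp
  qed
  have "X t = Z t"
  proof (rule affine_ode_unique[OF _ Z' _ t])
    show "(X has_vector_derivative X s + w s) (at s within {0..1})" if "s \<in> {0..1}" for s
      using X that by (simp add: traj_def)
    show "X 0 = Z 0"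
      using X unfolding traj_def Z_def by simp
  qed
  then show ?thesis
    unfolding Z_def .
qed

lemma traj_open_loop_of_feedback:
  assumes "admissible u" and "t \<in> {0..1}"
    and feedback: "\<And>s. s \<in> {t..1} \<Longrightarrow> u (state u x t s) s = w s"
  shows "traj (\<lambda>_ s. w s) x t (state u x t)"
  using state_traj[OF assms(1,2), of x] feedback by (simp add: traj_def)

lemma cost_open_loop_of_feedback:
  assumes u: "admissible u" and w: "continuous_on {0..1} w" and t: "t \<in> {0..1}"
    and feedback: "\<And>s. s \<in> {t..1} \<Longrightarrow> u (state u x t s) s = w s"
  shows "cost A y1 \<gamma> (\<lambda>_ s. w s) x t = cost A y1 \<gamma> u x t"
proof -
  have "state (\<lambda>_ s. w s) x t 1 = state u x t 1"
    using state_eq_traj[OF admissible_open_loop[OF w] t traj_open_loop_of_feedback[OF u t feedback]] t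
    by simp
  moreover have "integral {t..1} (\<lambda>s. (1/2) * norm (w s) ^ 2) =
      integral {t..1} (\<lambda>s. (1/2) * norm (u (state u x t s) s) ^ 2)"
    by (intro integral_cong) (simp add: feedback)
  ultimately show ?thesis
    by (simp add: cost_def)
qed

section \<open>First-order optimality of open-loop controls\<close>

definition open_loop_endpoint :: "real^'d \<Rightarrow> (real \<Rightarrow> real^'d) \<Rightarrow> real^'d" where
  "open_loop_endpoint x0 c = exp 1 *\<^sub>R (x0 + integral {0..1} (\<lambda>r. exp (- r) *\<^sub>R c r))"

lemma state_open_loop_endpoint:
  assumes "continuous_on {0..1} c"
  shows "state (\<lambda>_ s. c s) x0 0 1 = open_loop_endpoint x0 c"
  using state_open_loop[OF assms, of 0 1 x0] by (simp add: open_loop_endpoint_def)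

lemma cost_open_loop:
  assumes "continuous_on {0..1} c"
  shows "cost A y1 \<gamma> (\<lambda>_ s. c s) x0 0 =
    integral {0..1} (\<lambda>s. (1/2) * norm (c s) ^ 2) + \<gamma>/2 * norm (A *v open_loop_endpoint x0 c - y1) ^ 2"
  using state_open_loop_endpoint[OF assms] by (simp add: cost_def)

lemma open_loop_endpoint_perturb:
  assumes w: "continuous_on {0..1} w" and q: "continuous_on {0..1} q"
  shows "open_loop_endpoint x0 (\<lambda>s. w s + \<epsilon> *\<^sub>R q s) =
    open_loop_endpoint x0 w + \<epsilon> *\<^sub>R open_loop_endpoint 0 q"
proof -
  have split: "(\<lambda>s. exp (- s) *\<^sub>R (w s + \<epsilon> *\<^sub>R q s)) = (\<lambda>s. exp (- s) *\<^sub>R w s + \<epsilon> *\<^sub>R (exp (- s) *\<^sub>R q s))"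
    by (simp add: fun_eq_iff algebra_simps)
  have "(\<lambda>s. exp (- s) *\<^sub>R w s) integrable_on {0..1}" "(\<lambda>s. \<epsilon> *\<^sub>R (exp (- s) *\<^sub>R q s)) integrable_on {0..1}"
    by (intro integrable_continuous_interval continuous_intros w q)+
  then have "integral {0..1} (\<lambda>s. exp (- s) *\<^sub>R (w s + \<epsilon> *\<^sub>R q s)) =
      integral {0..1} (\<lambda>s. exp (- s) *\<^sub>R w s) + \<epsilon> *\<^sub>R integral {0..1} (\<lambda>s. exp (- s) *\<^sub>R q s)"
    unfolding split by (simp only: integral_add integral_cmul)
  then show ?thesis
    unfolding open_loop_endpoint_def by (simp add: algebra_simps)
qed

lemma cost_open_loop_perturb:
  fixes A :: "real^'d^'k" and w q :: "real \<Rightarrow> real^'d"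
  assumes w: "continuous_on {0..1} w" and q: "continuous_on {0..1} q"
  defines "Q \<equiv> A *v open_loop_endpoint 0 q"
  shows "cost A y1 \<gamma> (\<lambda>_ s. w s + \<epsilon> *\<^sub>R q s) x0 0 = cost A y1 \<gamma> (\<lambda>_ s. w s) x0 0
    + \<epsilon> * (integral {0..1} (\<lambda>s. w s \<bullet> q s) + \<gamma> * ((A *v open_loop_endpoint x0 w - y1) \<bullet> Q))
    + \<epsilon>\<^sup>2 * (integral {0..1} (\<lambda>s. (1/2) * norm (q s) ^ 2) + \<gamma>/2 * norm Q ^ 2)"
proof -
  have perturbed: "continuous_on {0..1} (\<lambda>s. w s + \<epsilon> *\<^sub>R q s)"
    by (intro continuous_intros w q)
  have running: "integral {0..1} (\<lambda>s. (1/2) * norm (w s + \<epsilon> *\<^sub>R q s) ^ 2) =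
      integral {0..1} (\<lambda>s. (1/2) * norm (w s) ^ 2) + \<epsilon> * integral {0..1} (\<lambda>s. w s \<bullet> q s)
      + \<epsilon>\<^sup>2 * integral {0..1} (\<lambda>s. (1/2) * norm (q s) ^ 2)"
    using w q
    by (simp add: norm_add_scaleR_power2 algebra_simps integral_add
        integrable_continuous_interval continuous_intros)
  have "A *v open_loop_endpoint x0 (\<lambda>s. w s + \<epsilon> *\<^sub>R q s) - y1 =
      (A *v open_loop_endpoint x0 w - y1) + \<epsilon> *\<^sub>R Q"
    by (simp add: open_loop_endpoint_perturb[OF w q] Q_def matrix_vector_right_distrib
        matrix_vector_mult_scaleR)
  then have terminal: "norm (A *v open_loop_endpoint x0 (\<lambda>s. w s + \<epsilon> *\<^sub>R q s) - y1) ^ 2 =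
      norm (A *v open_loop_endpoint x0 w - y1) ^ 2 + 2 * \<epsilon> * ((A *v open_loop_endpoint x0 w - y1) \<bullet> Q)
      + \<epsilon>\<^sup>2 * norm Q ^ 2"
    by (simp only: norm_add_scaleR_power2)
  show ?thesis
    unfolding cost_open_loop[OF perturbed] cost_open_loop[OF w] running terminal
    by (simp add: algebra_simps)
qed

lemma open_loop_optimal_control_eq_costate:
  fixes A :: "real^'d^'k" and w :: "real \<Rightarrow> real^'d"
  assumes w: "continuous_on {0..1} w"
    and opt: "\<And>c. continuous_on {0..1} c \<Longrightarrow> cost A y1 \<gamma> (\<lambda>_ s. w s) x0 0 \<le> cost A y1 \<gamma> (\<lambda>_ s. c s) x0 0"
    and s: "s \<in> {0..1}"
  shows "w s = - (\<gamma> * exp (1 - s)) *\<^sub>R (transpose A *v (A *v state (\<lambda>_ s. w s) x0 0 1 - y1))"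
proof -
  define p where "p = \<gamma> *\<^sub>R (transpose A *v (A *v open_loop_endpoint x0 w - y1))"
  \<comment> \<open>q is the gradient of the cost at w, so the first variation in direction q is the
    integral of |q|^2.\<close>
  define q where "q s = w s + exp (1 - s) *\<^sub>R p" for s
  have q: "continuous_on {0..1} q"
    unfolding q_def by (intro continuous_intros w)
  have terminal_variation:
    "\<gamma> * ((A *v open_loop_endpoint x0 w - y1) \<bullet> (A *v open_loop_endpoint 0 q)) =
      integral {0..1} (\<lambda>s. (exp (1 - s) *\<^sub>R p) \<bullet> q s)"
  proof -
    have "(\<lambda>s. exp (1 - s) *\<^sub>R q s) = (\<lambda>s. exp 1 *\<^sub>R (exp (- s) *\<^sub>R q s))"
      by (simp add: fun_eq_iff exp_diff exp_minus field_simps)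
    then have Q_eq: "open_loop_endpoint 0 q = integral {0..1} (\<lambda>s. exp (1 - s) *\<^sub>R q s)"
      by (simp only: open_loop_endpoint_def add_0_left integral_cmul)
    have "\<gamma> * ((A *v open_loop_endpoint x0 w - y1) \<bullet> (A *v open_loop_endpoint 0 q)) =
        p \<bullet> open_loop_endpoint 0 q"
      by (simp add: p_def transpose_matrix_vector dot_lmul_matrix)
    also have "\<dots> = integral {0..1} (\<lambda>s. (exp (1 - s) *\<^sub>R q s) \<bullet> p)"
      unfolding Q_eq
      by (subst integral_component_eq)
        (auto simp: inner_commute intro!: integrable_continuous_interval continuous_intros q)
    also have "\<dots> = integral {0..1} (\<lambda>s. (exp (1 - s) *\<^sub>R p) \<bullet> q s)"
      by (simp add: inner_commute)
    finally show ?thesis .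
  qed
  define a where "a = integral {0..1} (\<lambda>s. q s \<bullet> q s)"
  have first_variation:
    "integral {0..1} (\<lambda>s. w s \<bullet> q s) + integral {0..1} (\<lambda>s. (exp (1 - s) *\<^sub>R p) \<bullet> q s) = a"
    unfolding a_def q_def
    using w by (simp add: inner_add_left integral_add integrable_continuous_interval continuous_intros)
  define C where
    "C = integral {0..1} (\<lambda>s. (1/2) * norm (q s) ^ 2) + \<gamma>/2 * norm (A *v open_loop_endpoint 0 q) ^ 2"
  have expansion:
    "cost A y1 \<gamma> (\<lambda>_ s. w s + \<epsilon> *\<^sub>R q s) x0 0 = cost A y1 \<gamma> (\<lambda>_ s. w s) x0 0 + \<epsilon> * a + \<epsilon>\<^sup>2 * C" for \<epsilon>
    unfolding cost_open_loop_perturb[OF w q] terminal_variation first_variation C_def ..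
  have "a = 0"
  proof (rule quadratic_nonneg_imp_linear_coeff_0)
    show "0 \<le> \<epsilon> * a + \<epsilon>\<^sup>2 * C" for \<epsilon>
      using opt[of "\<lambda>s. w s + \<epsilon> *\<^sub>R q s"] w q by (simp add: expansion continuous_intros)
  qed
  then have "q s = 0"
    using q s unfolding a_def by (subst (asm) integral_eq_0_iff) (auto intro: continuous_intros)
  then show ?thesis
    using state_open_loop_endpoint[OF w] by (simp add: q_def p_def eq_neg_iff_add_eq_0 mult.commute)
qed

section \<open>Verification by the HJB equation\<close>

locale HJB_value_fun =
  fixes A :: "real^'d^'k" and y1 :: "real^'k" and \<gamma> :: real
    and Vx :: "real^'d \<Rightarrow> real \<Rightarrow> real^'d" and Vt :: "real^'d \<Rightarrow> real \<Rightarrow> real"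
  assumes V_deriv: "\<forall>x. \<forall>t\<in>{0..1}.
       ((\<lambda>(z, s). value_fun A y1 \<gamma> z s) has_derivative (\<lambda>(h, r). Vx x t \<bullet> h + Vt x t * r))
         (at (x, t) within UNIV \<times> {0..1})"
    and Vx_cont: "continuous_on (UNIV \<times> {0..1}) (\<lambda>(x, t). Vx x t)"
    and HJB: "\<forall>x. \<forall>t\<in>{0<..<1}.
       (\<forall>v. - Vt x t \<le> (1/2) * norm v ^ 2 + Vx x t \<bullet> (x + v)) \<and>
       (\<exists>v. - Vt x t = (1/2) * norm v ^ 2 + Vx x t \<bullet> (x + v))"
begin

lemma optimal_hamiltonian_gap_has_integral_0:
  assumes adm: "admissible u" and opt: "cost A y1 \<gamma> u x0 0 = value_fun A y1 \<gamma> x0 0"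
  shows "((\<lambda>s. (1/2) * norm (u (state u x0 0 s) s + Vx (state u x0 0 s) s) ^ 2) has_integral 0) {0..1}"
proof -
  define X where "X = state u x0 0"
  define w where "w s = u (X s) s" for s
  define P where "P s = Vx (X s) s" for s
  have traj: "traj u x0 0 X"
    unfolding X_def by (rule state_traj[OF adm]) simp
  then have X0: "X 0 = x0"
    and X': "\<And>s. s \<in> {0..1} \<Longrightarrow> (X has_vector_derivative X s + w s) (at s within {0..1})"
    unfolding traj_def w_def by auto
  have w_sq: "(\<lambda>s. norm (w s) ^ 2) integrable_on {0..1}"
    using adm traj unfolding admissible_def w_def by auto
  have dV: "((\<lambda>s. value_fun A y1 \<gamma> (X s) s) has_vector_derivative P s \<bullet> (X s + w s) + Vt (X s) s)
      (at s within {0..1})" if "s \<in> {0..1}" for s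
    unfolding P_def using V_deriv that by (intro has_vector_derivative_along_curve X') auto
  have "((\<lambda>s. P s \<bullet> (X s + w s) + Vt (X s) s) has_integral
      value_fun A y1 \<gamma> (X 1) 1 - value_fun A y1 \<gamma> x0 0) {0..1}"
    using fundamental_theorem_of_calculus[of 0 1 "\<lambda>s. value_fun A y1 \<gamma> (X s) s"] dV X0 by auto
  then have "((\<lambda>s. P s \<bullet> (X s + w s) + Vt (X s) s + (1/2) * norm (w s) ^ 2) has_integral
      value_fun A y1 \<gamma> (X 1) 1 - value_fun A y1 \<gamma> x0 0
        + integral {0..1} (\<lambda>s. (1/2) * norm (w s) ^ 2)) {0..1}"
    by (intro has_integral_add integrable_integral integrable_on_mult_right w_sq)
  moreover have "value_fun A y1 \<gamma> (X 1) 1 - value_fun A y1 \<gamma> x0 0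
      + integral {0..1} (\<lambda>s. (1/2) * norm (w s) ^ 2) = 0"
    using opt value_fun_terminal[OF adm, of A y1 \<gamma> "X 1"] unfolding cost_def X_def w_def by linarith
  ultimately have "((\<lambda>s. P s \<bullet> (X s + w s) + Vt (X s) s + (1/2) * norm (w s) ^ 2) has_integral 0) {0..1}"
    by simp
  then have "((\<lambda>s. (1/2) * norm (w s + P s) ^ 2) has_integral 0) {0..1}"
  proof (rule has_integral_spike[OF negligible_finite[of "{0, 1::real}"], rotated 2])
    fix s :: real assume "s \<in> {0..1} - {0, 1}"
    then have "s \<in> {0<..<1}"
      by auto
    then obtain v0 where
        le: "\<And>v. - Vt (X s) s \<le> (1/2) * norm v ^ 2 + P s \<bullet> (X s + v)" and
        eq: "- Vt (X s) s = (1/2) * norm v0 ^ 2 + P s \<bullet> (X s + v0)"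
      using HJB unfolding P_def by blast
    show "(1/2) * norm (w s + P s) ^ 2 = P s \<bullet> (X s + w s) + Vt (X s) s + (1/2) * norm (w s) ^ 2"
      using hamiltonian_min_eq_square[OF le eq, of "w s"] by linarith
  qed simp
  then show ?thesis
    by (simp add: X_def w_def P_def)
qed

lemma optimal_feedback_eq_neg_gradient:
  assumes adm: "admissible u" and opt: "cost A y1 \<gamma> u x0 0 = value_fun A y1 \<gamma> x0 0"
    and t: "t \<in> {0..1}"
  shows "u (state u x0 0 t) t = - Vx (state u x0 0 t) t"
proof -
  define X where "X = state u x0 0"
  define w where "w s = u (X s) s" for s
  define P where "P s = Vx (X s) s" for s
  have traj: "traj u x0 0 X"
    unfolding X_def by (rule state_traj[OF adm]) simp
  then have X': "\<And>s. s \<in> {0..1} \<Longrightarrow> (X has_vector_derivative X s + w s) (at s within {0..1})"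
    unfolding traj_def w_def by auto
  have X_cont: "continuous_on {0..1} X"
    using traj_continuous_on[OF traj] .
  have P_cont: "continuous_on {0..1} P"
    unfolding P_def using X_cont
    by (intro continuous_on_compose2[OF Vx_cont, of _ "\<lambda>s. (X s, s)", simplified])
      (auto intro: continuous_intros)
  define N where "N = {s \<in> {0..1}. (1/2) * norm (w s + P s) ^ 2 \<noteq> 0}"
  have "negligible N"
    unfolding N_def w_def P_def X_def
    by (rule has_integral_0_nonneg_imp_negligible[OF optimal_hamiltonian_gap_has_integral_0[OF adm opt]])
      simp
  have "X t + w t = X t - P t"
  proof (rule has_vector_derivative_eq_ae_imp_eq[OF _ X' \<open>negligible N\<close> _ _ t])
    show "X s + w s = X s - P s" if "s \<in> {0..1} - N" for s
      using that by (simp add: N_def add_eq_0_iff2)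
    show "continuous_on {0..1} (\<lambda>s. X s - P s)"
      by (intro continuous_intros X_cont P_cont)
  qed simp
  then show ?thesis
    by (simp add: X_def w_def P_def)
qed

end

theorem proposition2:
  fixes A :: "real^'d^'k" and y1 :: "real^'k" and x0 :: "real^'d" and \<gamma> :: real
    and Vx :: "real^'d \<Rightarrow> real \<Rightarrow> real^'d" and Vt :: "real^'d \<Rightarrow> real \<Rightarrow> real"
    and ustar :: "real^'d \<Rightarrow> real \<Rightarrow> real^'d"
  assumes gamma_pos: "\<gamma> > 0"
    and V_deriv: "\<forall>x. \<forall>t\<in>{0..1}.
       ((\<lambda>(z, s). value_fun A y1 \<gamma> z s) has_derivative (\<lambda>(h, r). Vx x t \<bullet> h + Vt x t * r))
         (at (x, t) within UNIV \<times> {0..1})"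
    and Vx_cont: "continuous_on (UNIV \<times> {0..1}) (\<lambda>(x, t). Vx x t)"
    and Vt_cont: "continuous_on (UNIV \<times> {0..1}) (\<lambda>(x, t). Vt x t)"
    and HJB: "\<forall>x. \<forall>t\<in>{0<..<1}.
       (\<forall>v. - Vt x t \<le> (1/2) * norm v ^ 2 + Vx x t \<bullet> (x + v)) \<and>
       (\<exists>v. - Vt x t = (1/2) * norm v ^ 2 + Vx x t \<bullet> (x + v))"
    and ustar_adm: "admissible ustar"
    and ustar_opt: "cost A y1 \<gamma> ustar x0 0 = value_fun A y1 \<gamma> x0 0"
  shows "\<forall>t\<in>{0..1}.
     ustar (state ustar x0 0 t) t = - Vx (state ustar x0 0 t) t \<and>
     state ustar x0 0 t =
        exp t *\<^sub>R x0
        - (\<gamma>/2 * exp (1 + t)) *\<^sub>R (transpose A *v (A *v state ustar x0 0 1 - y1))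
        + (\<gamma>/2 * exp (1 - t)) *\<^sub>R (transpose A *v (A *v state ustar x0 0 1 - y1)) \<and>
     Vx (state ustar x0 0 t) t =
        (\<gamma> * exp (1 - t)) *\<^sub>R (transpose A *v (A *v state ustar x0 0 1 - y1))"
proof -
  interpret HJB_value_fun A y1 \<gamma> Vx Vt
    using V_deriv Vx_cont HJB by unfold_locales
  define X where "X = state ustar x0 0"
  define w where "w s = - Vx (X s) s" for s
  define v where "v = transpose A *v (A *v X 1 - y1)"
  have feedback: "ustar (X s) s = w s" if "s \<in> {0..1}" for s
    using optimal_feedback_eq_neg_gradient[OF ustar_adm ustar_opt that] by (simp add: X_def w_def)
  have X_traj: "traj (\<lambda>_ s. w s) x0 0 X"
    unfolding X_def
    by (rule traj_open_loop_of_feedback[OF ustar_adm]) (simp_all add: feedback[unfolded X_def])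
  have w_cont: "continuous_on {0..1} w"
    unfolding w_def using traj_continuous_on[OF X_traj]
    by (intro continuous_intros continuous_on_compose2[OF Vx_cont, of _ "\<lambda>s. (X s, s)", simplified])
      (auto intro: continuous_intros)
  have "cost A y1 \<gamma> (\<lambda>_ s. w s) x0 0 = value_fun A y1 \<gamma> x0 0"
    by (rule trans[OF cost_open_loop_of_feedback[OF ustar_adm w_cont _ feedback[unfolded X_def]] ustar_opt])
      simp
  then have w_opt: "cost A y1 \<gamma> (\<lambda>_ s. w s) x0 0 \<le> cost A y1 \<gamma> (\<lambda>_ s. c s) x0 0"
    if "continuous_on {0..1} c" for c
    using value_fun_le_cost[OF gamma_pos admissible_open_loop[OF that]] by simp
  have X_end: "state (\<lambda>_ s. w s) x0 0 1 = X 1"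
    by (rule state_eq_traj[OF admissible_open_loop[OF w_cont] _ X_traj]) simp_all
  have costate: "w s = - (\<gamma> * exp (1 - s)) *\<^sub>R v" if "s \<in> {0..1}" for s
    using open_loop_optimal_control_eq_costate[OF w_cont w_opt that] X_end by (simp add: v_def)
  have "X s = exp s *\<^sub>R x0 - (\<gamma>/2 * exp (1 + s)) *\<^sub>R v + (\<gamma>/2 * exp (1 - s)) *\<^sub>R v"
    and "Vx (X s) s = (\<gamma> * exp (1 - s)) *\<^sub>R v" if "s \<in> {0..1}" for s
    using traj_open_loop_exp_forcing[OF X_traj costate that] costate[OF that] by (simp_all add: w_def)
  then show ?thesis
    using feedback unfolding X_def[symmetric] v_def[symmetric] by (simp add: w_def)
qed

end
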